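(* Let $p$ be a prime, let $r$ be a positive integer, let $V\subseteq\mathbb{Z}_p^r$, and let $S\subseteq\mathbb{N}$ be an infinite subset. For each $1\le k\le r$ let $P_k\in\mathbb{Z}_p\langle z\rangle$, and define $P\colon S\to\mathbb{Z}_p^r$ by $P(n)=(P_1(n),\dots,P_r(n))$. Suppose that for every $y\in\mathbb{Z}_p^r\setminus V$ the set $\{n\in S\colon P(n)=y\}$ is empty, and for every $y\in V$ the set $\{n\in S\colon P(n)=y\}$ is finite. Then there exists $N\ge 0$ such that $$|\{n\in S\colon P(n)=y\}|\le N$$ for all $y\in V$.
   Context: $\mathbb{Q}_p\langle z\rangle$ denotes the ring of strictly convergent power series $\sum_{n\ge0}a_nz^n\in\mathbb{Q}_p[[z]]$ with $|a_n|_p\to0$; the Gauss norm is $|\sum a_nz^n|_{\rm Gauss}=\max_n|a_n|_p$, and $\mathbb{Z}_p\langle z\rangle$ is the subring of elements of Gauss norm at most $1$ (i.e. with all $a_n\in\mathbb{Z}_p$). Such series converge on $\mathbb{Z}_p$, so $P_k(n)$ is defined for $n\in\mathbb{N}$. Here $\mathbb{N}=\{0,1,2,\dots\}$. *)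

theory Defs
  imports "HOL-Computational_Algebra.Primes"
begin

text \<open>p-adic integers, represented as the inverse limit of Z/p^k Z:
  a p-adic integer x is a compatible sequence of residues x k in {0..<p^k}.\<close>
definition padic_int :: "nat \<Rightarrow> (nat \<Rightarrow> int) set" where
  "padic_int p = {x. (\<forall>k. 0 \<le> x k \<and> x k < int p ^ k) \<and>
                      (\<forall>k. x k = x (Suc k) mod int p ^ k)}"

definition padic_tuples :: "nat \<Rightarrow> nat \<Rightarrow> (nat \<Rightarrow> int) list set" where
  "padic_tuples p r = {ys. length ys = r \<and> set ys \<subseteq> padic_int p}"

text \<open>Strictly convergent power series with Z_p coefficients (Z_p<z>):
  a coefficient sequence a :: nat => Z_p with a m -> 0 p-adically, i.e.
  for every k, a m is divisible by p^k (residue 0 mod p^k) for all large m.\<close>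
definition tate_Zp :: "nat \<Rightarrow> (nat \<Rightarrow> nat \<Rightarrow> int) set" where
  "tate_Zp p = {a. (\<forall>m. a m \<in> padic_int p) \<and> (\<forall>k. \<exists>M. \<forall>m\<ge>M. a m k = 0)}"

text \<open>Evaluation of such a series at a natural number n: the residue mod p^k of
  the value is the residue of the (finite) sum of the terms whose coefficient is
  nonzero mod p^k.\<close>
definition tate_eval :: "nat \<Rightarrow> (nat \<Rightarrow> nat \<Rightarrow> int) \<Rightarrow> nat \<Rightarrow> (nat \<Rightarrow> int)" where
  "tate_eval p a n = (\<lambda>k. (\<Sum>m\<in>{m. a m k \<noteq> 0}. a m k * int n ^ m) mod int p ^ k)"

end

theory Submission
  imports Defs "HOL-Computational_Algebra.Polynomial"
begin

text \<open>
  If every \<open>P\<^sub>k\<close> is constant, the only nonempty fibre is \<open>S\<close> itself, which is infinite.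
  Otherwise some \<open>a = P\<^sub>k\<close> is nonconstant. Let \<open>p\<^sup>v\<close> be the largest power of \<open>p\<close> dividing all
  nonconstant coefficients of \<open>a\<close> and \<open>D \<ge> 1\<close> the last index whose coefficient is not
  divisible by \<open>p\<^sup>v\<^sup>+\<^sup>1\<close>. Then \<open>a\<close> takes every value at most \<open>D\<close> times on \<open>\<nat>\<close>, a Strassmann-type
  bound: given \<open>D + 1\<close> points \<open>\<le> M\<close> with equal value, truncate \<open>a\<close> modulo \<open>p\<^sup>v\<^sup>+\<^sup>1\<^sup>+\<^sup>D\<^sup>M\<close> to an
  integer polynomial and divide out the points one at a time by synthetic division. Distinct
  points \<open>\<le> M\<close> differ by less than \<open>p\<^sup>M\<^sup>+\<^sup>1\<close>, so each division loses at most \<open>M\<close> in \<open>p\<close>-adic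
  valuation, while the coefficient pattern survives with \<open>D\<close> lowered by one. At \<open>D = 0\<close> only the
  constant coefficient escapes divisibility by \<open>p\<^sup>v\<^sup>+\<^sup>1\<close>, so the polynomial cannot vanish modulo
  \<open>p\<^sup>v\<^sup>+\<^sup>1\<close> at any point.
\<close>

lemma dvd_poly_if_dvd_coeffs:
  fixes G :: "'a::comm_semiring_1 poly"
  assumes "\<And>i. d dvd coeff G i"
  shows "d dvd poly G x"
  unfolding poly_altdef using assms by (auto intro!: dvd_sum)

lemma poly_shift_eq_pCons:
  "poly_shift n G = pCons (coeff G n) (poly_shift (Suc n) G)"
  by (simp add: poly_eq_iff coeff_poly_shift coeff_pCons split: nat.split)

lemma poly_shift_Suc_pCons [simp]:
  "poly_shift (Suc n) (pCons a G) = poly_shift n G"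
  by (simp add: poly_eq_iff coeff_poly_shift)

lemma coeff_synthetic_div_eq_poly_shift:
  "coeff (synthetic_div G c) j = poly (poly_shift (Suc j) G) c"
proof (induction G arbitrary: j)
  case (pCons a G)
  then show ?case by (cases j) simp_all
qed simp

lemma coeff_synthetic_div_rec:
  "coeff (synthetic_div G c) j = coeff G (Suc j) + c * coeff (synthetic_div G c) (Suc j)"
  unfolding coeff_synthetic_div_eq_poly_shift by (subst poly_shift_eq_pCons) simp

lemma dvd_coeff_synthetic_div:
  fixes G :: "'a::comm_semiring_1 poly"
  assumes "\<And>m. m > j \<Longrightarrow> d dvd coeff G m"
  shows "d dvd coeff (synthetic_div G c) j"
  unfolding coeff_synthetic_div_eq_poly_shift
  by (rule dvd_poly_if_dvd_coeffs) (simp add: coeff_poly_shift assms)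

lemma poly_diff_eq_synthetic_div:
  fixes G :: "'a::comm_ring_1 poly"
  shows "poly G x - poly G c = (x - c) * poly (synthetic_div G c) x"
  using arg_cong[OF synthetic_div_correct'[of c G], of "\<lambda>q. poly q x"]
  by (simp add: algebra_simps)

lemma prime_power_dvd_mult_cancel:
  fixes p a b :: "'a::factorial_semiring"
  assumes "prime_elem p" "\<not> p ^ Suc M dvd a" "p ^ (e + M) dvd a * b"
  shows "p ^ e dvd b"
proof (cases "b = 0")
  case False
  have "a \<noteq> 0" using assms(2) by auto
  note multiplicity_iff = power_dvd_iff_le_multiplicity[OF _ prime_elem_not_unit[OF assms(1)]]
  have "multiplicity p a \<le> M"
    using assms(2) multiplicity_iff[OF \<open>a \<noteq> 0\<close>, of "Suc M"] by simp
  moreover have "e + M \<le> multiplicity p a + multiplicity p b"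
    using assms(3) multiplicity_iff[of "a * b"] \<open>a \<noteq> 0\<close> False
    by (simp add: prime_elem_multiplicity_mult_distrib[OF assms(1)])
  ultimately show ?thesis using multiplicity_iff[OF False] by simp
qed simp

lemma too_many_roots_mod_prime_power:
  fixes p :: "'a::{factorial_semiring, idom}" and G :: "'a poly"
  assumes "prime_elem p"
    and "card X = Suc D"
    and "\<forall>m\<ge>1. p ^ v dvd coeff G m"
    and "\<not> p ^ Suc v dvd coeff G D"
    and "\<forall>m>D. p ^ Suc v dvd coeff G m"
    and "\<forall>x\<in>X. \<forall>y\<in>X. x \<noteq> y \<longrightarrow> \<not> p ^ Suc M dvd (x - y)"
    and "\<forall>x\<in>X. p ^ (Suc v + D * M) dvd poly G x"
  shows False
  using assms(2-)
proof (induction D arbitrary: G X)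
  case 0
  then obtain x where X: "X = {x}" by (auto simp: card_Suc_eq)
  have "coeff G 0 = poly G x - x * coeff (synthetic_div G x) 0"
    using poly_diff_eq_synthetic_div[of G 0 x] by (simp add: poly_0_coeff_0 algebra_simps)
  moreover have "p ^ Suc v dvd coeff (synthetic_div G x) 0"
    using "0.prems"(4) by (intro dvd_coeff_synthetic_div) simp
  moreover have "p ^ Suc v dvd poly G x" using "0.prems"(6) X by simp
  ultimately have "p ^ Suc v dvd coeff G 0" by simp
  then show False using "0.prems"(3) by simp
next
  case (Suc D)
  obtain x0 where x0: "x0 \<in> X" using Suc.prems(1) by fastforce
  define Q where "Q = synthetic_div G x0"
  have fin: "finite X" using Suc.prems(1) card.infinite by fastforce
  have card': "card (X - {x0}) = Suc D" using Suc.prems(1) x0 fin by simp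
  have low: "\<forall>m\<ge>1. p ^ v dvd coeff Q m"
    unfolding Q_def using Suc.prems(2) by (auto intro: dvd_coeff_synthetic_div)
  have high: "\<forall>m>D. p ^ Suc v dvd coeff Q m"
    unfolding Q_def using Suc.prems(4) by (auto intro: dvd_coeff_synthetic_div)
  have lead: "\<not> p ^ Suc v dvd coeff Q D"
  proof
    assume "p ^ Suc v dvd coeff Q D"
    moreover have "p ^ Suc v dvd x0 * coeff Q (Suc D)" using high by simp
    ultimately have "p ^ Suc v dvd coeff G (Suc D)"
      using coeff_synthetic_div_rec[of G x0 D] unfolding Q_def by (metis dvd_add_left_iff)
    then show False using Suc.prems(3) by simp
  qed
  have incongruent: "\<forall>x\<in>X - {x0}. \<forall>y\<in>X - {x0}. x \<noteq> y \<longrightarrow> \<not> p ^ Suc M dvd (x - y)"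
    using Suc.prems(5) by blast
  have roots: "\<forall>x\<in>X - {x0}. p ^ (Suc v + D * M) dvd poly Q x"
  proof
    fix x assume x: "x \<in> X - {x0}"
    have "p ^ (Suc v + D * M + M) dvd poly G x - poly G x0"
      using Suc.prems(6) x x0 by (simp add: dvd_diff add.commute add.left_commute)
    then have "p ^ (Suc v + D * M + M) dvd (x - x0) * poly Q x"
      unfolding Q_def poly_diff_eq_synthetic_div .
    moreover have "\<not> p ^ Suc M dvd (x - x0)" using Suc.prems(5) x x0 by blast
    ultimately show "p ^ (Suc v + D * M) dvd poly Q x"
      using prime_power_dvd_mult_cancel[OF assms(1)] by blast
  qed
  show False using Suc.IH[OF card' low lead high incongruent roots] .
qed

lemma prime_power_not_dvd_diff_of_le:
  fixes x y M p :: nat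
  assumes "p \<ge> 2" "x \<le> M" "y \<le> M" "x \<noteq> y"
  shows "\<not> int p ^ Suc M dvd (int x - int y)"
proof
  assume "int p ^ Suc M dvd (int x - int y)"
  moreover have "int x - int y \<noteq> 0" using assms(4) by simp
  ultimately have "\<bar>int p ^ Suc M\<bar> \<le> \<bar>int x - int y\<bar>" by (intro dvd_imp_le_int)
  moreover have "\<bar>int x - int y\<bar> \<le> int M" using assms(2,3) by (simp add: abs_le_iff)
  moreover have "M < p ^ Suc M"
  proof -
    have "M < 2 ^ M" by (rule less_exp)
    also have "\<dots> \<le> p ^ M" using assms(1) by (simp add: power_mono)
    also have "\<dots> \<le> p ^ Suc M" using assms(1) by simp
    finally show ?thesis .
  qed
  then have "int M < int p ^ Suc M" by (metis of_nat_less_iff of_nat_power)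
  ultimately show False by simp
qed

lemma padic_int_range:
  assumes "x \<in> padic_int p"
  shows "0 \<le> x k" "x k < int p ^ k"
  using assms unfolding padic_int_def by blast+

lemma padic_int_mod:
  assumes "x \<in> padic_int p" "j \<le> k"
  shows "x j = x k mod int p ^ j"
  using assms(2)
proof (induction k rule: dec_induct)
  case base
  then show ?case using padic_int_range[OF assms(1)] by simp
next
  case (step k)
  have "x k = x (Suc k) mod int p ^ k" using assms(1) unfolding padic_int_def by blast
  moreover have "int p ^ j dvd int p ^ k" using step.hyps(1) by (simp add: le_imp_power_dvd)
  ultimately have "x k mod int p ^ j = x (Suc k) mod int p ^ j" by (metis mod_mod_cancel)
  then show ?case using step.IH by simp
qed

lemma padic_int_eq_0_iff:
  assumes "x \<in> padic_int p" "j \<le> k"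
  shows "x j = 0 \<longleftrightarrow> int p ^ j dvd x k"
  using padic_int_mod[OF assms] by (simp add: dvd_eq_mod_eq_0)

lemma padic_int_0:
  assumes "x \<in> padic_int p"
  shows "x 0 = 0"
  using padic_int_range[OF assms, of 0] by simp

definition tate_trunc :: "(nat \<Rightarrow> nat \<Rightarrow> int) \<Rightarrow> nat \<Rightarrow> int poly" where
  "tate_trunc a k = (\<Sum>m\<in>{m. a m k \<noteq> 0}. monom (a m k) m)"

lemma tate_eval_eq_poly_tate_trunc:
  "tate_eval p a n k = poly (tate_trunc a k) (int n) mod int p ^ k"
  by (simp add: tate_eval_def tate_trunc_def poly_sum poly_monom)

lemma coeff_tate_trunc:
  assumes "a \<in> tate_Zp p"
  shows "coeff (tate_trunc a k) m = a m k"
proof -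
  obtain M where "\<forall>m\<ge>M. a m k = 0" using assms unfolding tate_Zp_def by blast
  then have "{m. a m k \<noteq> 0} \<subseteq> {..<M}" by (auto simp: not_less[symmetric])
  then have "finite {m. a m k \<noteq> 0}" by (rule finite_subset) simp
  then show ?thesis by (simp add: tate_trunc_def coeff_sum coeff_monom)
qed

lemma tate_eval_constant:
  assumes "a \<in> tate_Zp p" "\<forall>m\<ge>1. \<forall>k. a m k = 0"
  shows "tate_eval p a n = a 0"
proof
  fix k
  have "tate_trunc a k = [:a 0 k:]"
    using assms by (auto simp: poly_eq_iff coeff_tate_trunc coeff_pCons split: nat.split)
  moreover have "0 \<le> a 0 k" "a 0 k < int p ^ k"
    using assms(1) padic_int_range unfolding tate_Zp_def by blast+
  ultimately show "tate_eval p a n k = a 0 k" by (simp add: tate_eval_eq_poly_tate_trunc)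
qed

lemma tate_Zp_strassmann_index:
  assumes "a \<in> tate_Zp p" "m0 \<ge> 1" "a m0 k0 \<noteq> 0"
  obtains v D where "D \<ge> 1" "\<forall>m\<ge>1. a m v = 0" "a D (Suc v) \<noteq> 0" "\<forall>m>D. a m (Suc v) = 0"
proof -
  have padic: "a m \<in> padic_int p" for m using assms(1) unfolding tate_Zp_def by blast
  define w where "w = (LEAST k. \<exists>m\<ge>1. a m k \<noteq> 0)"
  have w: "\<exists>m\<ge>1. a m w \<noteq> 0"
    unfolding w_def by (rule LeastI[of _ k0]) (use assms(2,3) in blast)
  then have "w \<noteq> 0" using padic_int_0[OF padic] by metis
  then obtain v where v: "w = Suc v" using not0_implies_Suc by blast
  have below: "\<forall>m\<ge>1. a m v = 0"
    using not_less_Least[of v "\<lambda>k. \<exists>m\<ge>1. a m k \<noteq> 0"] v unfolding w_def by simp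
  define T where "T = {m. m \<ge> 1 \<and> a m (Suc v) \<noteq> 0}"
  obtain B where B: "\<forall>m\<ge>B. a m (Suc v) = 0" using assms(1) unfolding tate_Zp_def by blast
  have "T \<subseteq> {..<B}"
  proof
    fix m assume "m \<in> T"
    then show "m \<in> {..<B}" using B unfolding T_def by (cases "m < B") auto
  qed
  then have "finite T" by (rule finite_subset) simp
  moreover have "T \<noteq> {}" using w v unfolding T_def by blast
  ultimately have "Max T \<in> T" by (rule Max_in)
  then have "Max T \<ge> 1" "a (Max T) (Suc v) \<noteq> 0" unfolding T_def by simp_all
  moreover have "a m (Suc v) = 0" if "m > Max T" for m
    using Max_ge[OF \<open>finite T\<close>, of m] that \<open>Max T \<ge> 1\<close> unfolding T_def by auto
  ultimately show thesis using that[OF _ below] by blast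
qed

lemma card_le_if_tate_eval_constant:
  assumes "prime p" "a \<in> tate_Zp p"
    and "D \<ge> 1" "\<forall>m\<ge>1. a m v = 0" "a D (Suc v) \<noteq> 0" "\<forall>m>D. a m (Suc v) = 0"
    and "finite Y" "\<forall>n\<in>Y. \<forall>n'\<in>Y. tate_eval p a n = tate_eval p a n'"
  shows "card Y \<le> D"
proof (rule ccontr)
  assume "\<not> card Y \<le> D"
  then have "Suc D \<le> card Y" by simp
  then obtain Z where "Z \<subseteq> Y" and card_Z: "card Z = Suc D" and "finite Z"
    by (rule obtain_subset_with_card_n)
  then obtain n0 where "n0 \<in> Z" by fastforce
  define M where "M = Max Z"
  define E where "E = Suc v + D * M"
  define G where "G = tate_trunc a E - [:poly (tate_trunc a E) (int n0):]"
  have padic: "a m \<in> padic_int p" for m using assms(2) unfolding tate_Zp_def by blast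
  have zero_iff: "a m j = 0 \<longleftrightarrow> int p ^ j dvd coeff G m" if "m \<ge> 1" "j \<le> Suc v" for m j
  proof -
    have "coeff G m = a m E"
      using that(1) coeff_tate_trunc[OF assms(2)] by (simp add: G_def coeff_pCons split: nat.split)
    then show ?thesis using padic_int_eq_0_iff[OF padic, of j E] that(2) by (simp add: E_def)
  qed
  have low: "\<forall>m\<ge>1. int p ^ v dvd coeff G m" using assms(4) zero_iff by simp
  have lead: "\<not> int p ^ Suc v dvd coeff G D" using assms(3,5) zero_iff by simp
  have high: "\<forall>m>D. int p ^ Suc v dvd coeff G m" using assms(3,6) zero_iff by simp
  have "\<forall>n\<in>Z. n \<le> M" unfolding M_def using \<open>finite Z\<close> by simp
  then have incongruent: "\<forall>x\<in>int ` Z. \<forall>y\<in>int ` Z. x \<noteq> y \<longrightarrow> \<not> int p ^ Suc M dvd (x - y)"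
    using prime_power_not_dvd_diff_of_le[OF prime_ge_2_nat[OF assms(1)]] by blast
  have roots: "\<forall>x\<in>int ` Z. int p ^ (Suc v + D * M) dvd poly G x"
  proof
    fix x assume "x \<in> int ` Z"
    then obtain n where n: "n \<in> Z" "x = int n" by blast
    have "tate_eval p a n E = tate_eval p a n0 E"
      using assms(8) n(1) \<open>n0 \<in> Z\<close> \<open>Z \<subseteq> Y\<close> by (metis subsetD)
    then show "int p ^ (Suc v + D * M) dvd poly G x"
      unfolding E_def[symmetric] by (simp add: n(2) G_def tate_eval_eq_poly_tate_trunc mod_eq_dvd_iff)
  qed
  have "card (int ` Z) = Suc D" using card_Z by (simp add: card_image)
  with too_many_roots_mod_prime_power[OF _ _ low lead high incongruent roots] assms(1)
  show False by simp
qed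

theorem lemma2p1:
  fixes p r :: nat and V :: "(nat \<Rightarrow> int) list set" and S :: "nat set"
    and P :: "nat \<Rightarrow> nat \<Rightarrow> nat \<Rightarrow> int"
  assumes "prime p" and "r \<ge> 1"
    and "V \<subseteq> padic_tuples p r"
    and "infinite S"
    and "\<forall>k\<in>{1..r}. P k \<in> tate_Zp p"
    and "\<forall>y\<in>padic_tuples p r - V.
           {n\<in>S. map (\<lambda>k. tate_eval p (P k) n) [1..<Suc r] = y} = {}"
    and "\<forall>y\<in>V. finite {n\<in>S. map (\<lambda>k. tate_eval p (P k) n) [1..<Suc r] = y}"
  shows "\<exists>N::nat. \<forall>y\<in>V.
           card {n\<in>S. map (\<lambda>k. tate_eval p (P k) n) [1..<Suc r] = y} \<le> N"
proof (cases "\<exists>k\<in>{1..r}. \<exists>m\<ge>1. \<exists>j. P k m j \<noteq> 0")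
  case False
  define y0 where "y0 = map (\<lambda>k. P k 0) [1..<Suc r]"
  have "tate_eval p (P k) n = P k 0" if "k \<in> set [1..<Suc r]" for k n
    using False assms(5) that by (intro tate_eval_constant) auto
  then have fibre: "{n\<in>S. map (\<lambda>k. tate_eval p (P k) n) [1..<Suc r] = y0} = S"
    unfolding y0_def by (simp cong: map_cong)
  have "y0 \<in> padic_tuples p r"
    using assms(5) unfolding y0_def padic_tuples_def tate_Zp_def by auto
  moreover have "S \<noteq> {}" using assms(4) by auto
  ultimately have "y0 \<in> V" using assms(6) fibre by blast
  then have "finite {n\<in>S. map (\<lambda>k. tate_eval p (P k) n) [1..<Suc r] = y0}" using assms(7) by blast
  then show ?thesis using assms(4) fibre by simp
next
  case True
  then obtain k0 m0 j0 where k0: "k0 \<in> {1..r}" and m0: "m0 \<ge> 1" and nonzero: "P k0 m0 j0 \<noteq> 0"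
    by blast
  have tate: "P k0 \<in> tate_Zp p" using assms(5) k0 by blast
  obtain v D where index:
    "D \<ge> 1" "\<forall>m\<ge>1. P k0 m v = 0" "P k0 D (Suc v) \<noteq> 0" "\<forall>m>D. P k0 m (Suc v) = 0"
    by (rule tate_Zp_strassmann_index[OF tate m0 nonzero])
  have "card {n\<in>S. map (\<lambda>k. tate_eval p (P k) n) [1..<Suc r] = y} \<le> D" if "y \<in> V" for y
  proof (rule card_le_if_tate_eval_constant[OF assms(1) tate index])
    show "finite {n\<in>S. map (\<lambda>k. tate_eval p (P k) n) [1..<Suc r] = y}"
      using assms(7) that by (rule bspec)
    have "k0 \<in> set [1..<Suc r]" using k0 by auto
    then show "\<forall>n\<in>{n\<in>S. map (\<lambda>k. tate_eval p (P k) n) [1..<Suc r] = y}.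
               \<forall>n'\<in>{n\<in>S. map (\<lambda>k. tate_eval p (P k) n) [1..<Suc r] = y}.
                 tate_eval p (P k0) n = tate_eval p (P k0) n'"
      by (auto simp: map_eq_conv)
  qed
  then show ?thesis by blast
qed

end
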